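(* Let $s\ge1$ be an integer, let $(G,Z)$ be a monic plantation, and let $\mathcal{S}$ be a normal set of transitions of $(G,Z)$. Then there exists $X\subseteq Z$ with $|X|\le\phi(s)$ such that at most $|Z|$ members of $\mathcal{S}$ have no foot in $X$.
   Context: Graphs are finite and simple. Two subgraphs are anticomplete if their vertex sets are disjoint and no edge joins them. $G$ is $s\mathcal{O}$-free if no $s$ cycles of $G$ are pairwise vertex-disjoint and pairwise anticomplete. $Z\subseteq V(G)$ is cycle-hitting if every cycle of $G$ has a vertex in $Z$. A plantation is a pair $(G,Z)$ with $G$ an $s\mathcal{O}$-free graph and $Z$ cycle-hitting. Let $F=G\setminus Z$ and $N$ the set of vertices of $V(G)\setminus Z$ with a neighbour in $Z$. $(G,Z)$ is monic if $Z$ is stable and each vertex of $N$ has exactly one neighbour in $Z$. A transition is a path of $F$ of length at least one with both ends in $N$ and no internal vertex in $N$; a vertex of $Z$ adjacent to an end of a transition $P$ is a foot of $P$. A set $\mathcal{S}$ of transitions is normal if (i) for all distinct $P,Q\in\mathcal{S}$, either $P,Q$ are anticomplete or have a common end, and (ii) each $P\in\mathcal{S}$ has an edge belonging to no other member of $\mathcal{S}$. $\phi(s)\ge0$ denotes a number (which exists by the Erdős–Pósa theorem) such that every multigraph in which no $s$ cycles are pairwise vertex-disjoint has a set of at most $\phi(s)$ vertices meeting every cycle; in multigraphs, loops and pairs of parallel edges count as cycles. *)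

theory Defs
  imports Main "HOL-Library.Multiset"
begin

definition graph :: "'a set \<Rightarrow> 'a set set \<Rightarrow> bool" where
  "graph V E \<longleftrightarrow> finite V \<and> (\<forall>e\<in>E. \<exists>u v. e = {u, v} \<and> u \<noteq> v \<and> u \<in> V \<and> v \<in> V)"

definition is_cycle :: "'a set \<Rightarrow> 'a set set \<Rightarrow> 'a list \<Rightarrow> bool" where
  "is_cycle V E C \<longleftrightarrow> distinct C \<and> length C \<ge> 3 \<and> set C \<subseteq> V \<and>
     (\<forall>i < length C. {C ! i, C ! ((i + 1) mod length C)} \<in> E)"

definition anticomplete :: "'a set set \<Rightarrow> 'a set \<Rightarrow> 'a set \<Rightarrow> bool" where
  "anticomplete E A B \<longleftrightarrow> A \<inter> B = {} \<and> (\<forall>a\<in>A. \<forall>b\<in>B. {a, b} \<notin> E)"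

definition sO_free :: "nat \<Rightarrow> 'a set \<Rightarrow> 'a set set \<Rightarrow> bool" where
  "sO_free s V E \<longleftrightarrow> \<not> (\<exists>Cs. length Cs = s \<and> (\<forall>C\<in>set Cs. is_cycle V E C) \<and>
      (\<forall>i < s. \<forall>j < s. i \<noteq> j \<longrightarrow> anticomplete E (set (Cs ! i)) (set (Cs ! j))))"

definition cycle_hitting :: "'a set \<Rightarrow> 'a set set \<Rightarrow> 'a set \<Rightarrow> bool" where
  "cycle_hitting V E Z \<longleftrightarrow> Z \<subseteq> V \<and> (\<forall>C. is_cycle V E C \<longrightarrow> set C \<inter> Z \<noteq> {})"

definition plantation :: "nat \<Rightarrow> 'a set \<Rightarrow> 'a set set \<Rightarrow> 'a set \<Rightarrow> bool" where
  "plantation s V E Z \<longleftrightarrow> graph V E \<and> sO_free s V E \<and> cycle_hitting V E Z"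

definition attach :: "'a set \<Rightarrow> 'a set set \<Rightarrow> 'a set \<Rightarrow> 'a set" where
  "attach V E Z = {v \<in> V - Z. \<exists>z\<in>Z. {v, z} \<in> E}"

definition stable :: "'a set set \<Rightarrow> 'a set \<Rightarrow> bool" where
  "stable E Z \<longleftrightarrow> (\<forall>u\<in>Z. \<forall>v\<in>Z. {u, v} \<notin> E)"

definition monic_plantation :: "nat \<Rightarrow> 'a set \<Rightarrow> 'a set set \<Rightarrow> 'a set \<Rightarrow> bool" where
  "monic_plantation s V E Z \<longleftrightarrow> plantation s V E Z \<and> stable E Z \<and>
     (\<forall>v\<in>attach V E Z. card {z\<in>Z. {v, z} \<in> E} = 1)"

definition is_path :: "'a set \<Rightarrow> 'a set set \<Rightarrow> 'a list \<Rightarrow> bool" where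
  "is_path W E P \<longleftrightarrow> distinct P \<and> P \<noteq> [] \<and> set P \<subseteq> W \<and>
     (\<forall>i. Suc i < length P \<longrightarrow> {P ! i, P ! Suc i} \<in> E)"

definition path_edges :: "'a list \<Rightarrow> 'a set set" where
  "path_edges P = {{P ! i, P ! Suc i} | i. Suc i < length P}"

definition path_ends :: "'a list \<Rightarrow> 'a set" where
  "path_ends P = {hd P, last P}"

definition transition :: "'a set \<Rightarrow> 'a set set \<Rightarrow> 'a set \<Rightarrow> 'a list \<Rightarrow> bool" where
  "transition V E Z P \<longleftrightarrow> is_path (V - Z) E P \<and> length P \<ge> 2 \<and>
     hd P \<in> attach V E Z \<and> last P \<in> attach V E Z \<and>
     (\<forall>i. 0 < i \<and> i < length P - 1 \<longrightarrow> P ! i \<notin> attach V E Z)"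

definition feet :: "'a set set \<Rightarrow> 'a set \<Rightarrow> 'a list \<Rightarrow> 'a set" where
  "feet E Z P = {z \<in> Z. \<exists>v\<in>path_ends P. {v, z} \<in> E}"

definition normal_set :: "'a set \<Rightarrow> 'a set set \<Rightarrow> 'a set \<Rightarrow> 'a list set \<Rightarrow> bool" where
  "normal_set V E Z S \<longleftrightarrow> (\<forall>P\<in>S. transition V E Z P) \<and>
     (\<forall>P\<in>S. \<forall>Q\<in>S. P \<noteq> Q \<longrightarrow>
        anticomplete E (set P) (set Q) \<or> path_ends P \<inter> path_ends Q \<noteq> {}) \<and>
     (\<forall>P\<in>S. \<exists>e\<in>path_edges P. \<forall>Q\<in>S. Q \<noteq> P \<longrightarrow> e \<notin> path_edges Q)"

text \<open>A finite multigraph: vertex set V, multiset M of edges, each edge a set of 1 (loop) or 2 vertices.\<close>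
definition multigraph :: "nat set \<Rightarrow> nat set multiset \<Rightarrow> bool" where
  "multigraph V M \<longleftrightarrow> finite V \<and> (\<forall>e\<in>#M. e \<noteq> {} \<and> e \<subseteq> V \<and> card e \<le> 2)"

text \<open>Vertex sets of cycles of a multigraph: loops, pairs of parallel edges, ordinary cycles.\<close>
definition mg_cycle :: "nat set \<Rightarrow> nat set multiset \<Rightarrow> nat set \<Rightarrow> bool" where
  "mg_cycle V M C \<longleftrightarrow>
     (\<exists>v\<in>V. C = {v} \<and> {v} \<in># M) \<or>
     (\<exists>u\<in>V. \<exists>v\<in>V. u \<noteq> v \<and> C = {u, v} \<and> count M {u, v} \<ge> 2) \<or>
     (\<exists>xs. distinct xs \<and> length xs \<ge> 3 \<and> set xs \<subseteq> V \<and> C = set xs \<and>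
        (\<forall>i < length xs. {xs ! i, xs ! ((i + 1) mod length xs)} \<in># M))"

text \<open>k is an admissible value of phi(s).\<close>
definition EP_bound :: "nat \<Rightarrow> nat \<Rightarrow> bool" where
  "EP_bound s k \<longleftrightarrow> (\<forall>V M. multigraph V M \<and>
     \<not> (\<exists>Cs. length Cs = s \<and> (\<forall>C\<in>set Cs. mg_cycle V M C) \<and>
          (\<forall>i < s. \<forall>j < s. i \<noteq> j \<longrightarrow> Cs ! i \<inter> Cs ! j = {}))
     \<longrightarrow> (\<exists>Y\<subseteq>V. card Y \<le> k \<and> (\<forall>C. mg_cycle V M C \<longrightarrow> C \<inter> Y \<noteq> {})))"

end

theory Submission
  imports Defs "HOL-Library.Transitive_Closure_Table"
begin

(* Map Z injectively into the naturals and let H be the multigraph on the image with one edge per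
   member P of S, joining the feet of P (a loop if P has a single foot). If C is the vertex set of
   a cycle of H, the feet of some member P of S are also joined by the other edges of that cycle.
   Following the corresponding transitions links the two ends of P in G while avoiding an edge
   that P shares with no other member of S, so G has a cycle inside the region of C: the preimage
   of C together with all transitions whose feet lie in it. Regions of disjoint sets are
   anticomplete (Z is stable, and normal transitions with disjoint feet are anticomplete), so H
   has no s pairwise disjoint cycles, and the Erdos-Posa bound gives a set Y of at most phi(s)
   vertices meeting every cycle of H. Its preimage X is the required set: the members of S with
   no foot in X are edges of the forest H - Y, so there are at most |Z| of them. *)

lemma rtranclp_nth_chain:
  assumes "\<And>k. i \<le> k \<Longrightarrow> k < j \<Longrightarrow> R (xs ! k) (xs ! Suc k)" and "i \<le> j"
  shows "R\<^sup>*\<^sup>* (xs ! i) (xs ! j)"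
  using assms
proof (induction j)
  case (Suc j)
  show ?case
  proof (cases "i = Suc j")
    case False
    then have "R\<^sup>*\<^sup>* (xs ! i) (xs ! j)" using Suc by simp
    then show ?thesis using Suc.prems False by (simp add: rtranclp.rtrancl_into_rtrancl)
  qed simp
qed simp

lemma rtranclp_pullback:
  assumes "inj_on h A" and "\<And>x y. R x y \<Longrightarrow> x \<in> h ` A \<and> y \<in> h ` A"
    and "\<And>a b. a \<in> A \<Longrightarrow> b \<in> A \<Longrightarrow> R (h a) (h b) \<Longrightarrow> R' a b"
    and "R\<^sup>*\<^sup>* (h a) (h b)" and "a \<in> A" and "b \<in> A"
  shows "R'\<^sup>*\<^sup>* a b"
proof -
  have "R'\<^sup>*\<^sup>* a b" if "R\<^sup>*\<^sup>* (h a) y" "b \<in> A" "y = h b" for y b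
    using that
  proof (induction arbitrary: b rule: rtranclp_induct)
    case base
    then show ?case using assms(1,5) by (simp add: inj_on_eq_iff)
  next
    case (step y z)
    then obtain c where "c \<in> A" "y = h c" using assms(2) by blast
    then have "R'\<^sup>*\<^sup>* a c" "R' c b" using step assms(3) by auto
    then show ?case by (rule rtranclp.rtrancl_into_rtrancl)
  qed
  then show ?thesis using assms(4-6) by blast
qed

section \<open>Multigraphs\<close>

lemma mg_cycle_subset: "mg_cycle V M C \<Longrightarrow> C \<subseteq> V"
  unfolding mg_cycle_def by auto

lemma mg_cycle_mono:
  assumes "mg_cycle V' M' C" and "V' \<subseteq> V" and "M' \<subseteq># M"
  shows "mg_cycle V M C"
proof -
  have mem: "e \<in># M' \<Longrightarrow> e \<in># M" for e
    using assms(3) by (rule mset_subset_eqD)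
  have "count M' e \<le> count M e" for e
    using assms(3) by (simp add: subseteq_mset_def)
  then have par: "\<exists>u\<in>V. \<exists>v\<in>V. u \<noteq> v \<and> C = {u, v} \<and> 2 \<le> count M {u, v}"
    if "\<exists>u\<in>V'. \<exists>v\<in>V'. u \<noteq> v \<and> C = {u, v} \<and> 2 \<le> count M' {u, v}"
    using that assms(2) by (meson le_trans subsetD)
  have loop: "\<exists>v\<in>V. C = {v} \<and> {v} \<in># M" if "\<exists>v\<in>V'. C = {v} \<and> {v} \<in># M'"
    using that mem assms(2) by blast
  have cyc: "\<exists>xs. distinct xs \<and> length xs \<ge> 3 \<and> set xs \<subseteq> V \<and> C = set xs \<and>
      (\<forall>i < length xs. {xs ! i, xs ! ((i + 1) mod length xs)} \<in># M)"
    if "\<exists>xs. distinct xs \<and> length xs \<ge> 3 \<and> set xs \<subseteq> V' \<and> C = set xs \<and>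
      (\<forall>i < length xs. {xs ! i, xs ! ((i + 1) mod length xs)} \<in># M')"
  proof -
    from that obtain xs where "distinct xs" "length xs \<ge> 3" "set xs \<subseteq> V'" "C = set xs"
      "\<forall>i < length xs. {xs ! i, xs ! ((i + 1) mod length xs)} \<in># M'" by blast
    then show ?thesis using mem assms(2) by blast
  qed
  show ?thesis
    using assms(1) loop par cyc unfolding mg_cycle_def by argo
qed

definition mg_degree :: "nat set multiset \<Rightarrow> nat \<Rightarrow> nat" where
  "mg_degree M v = size {#e \<in># M. v \<in> e#}"

definition mg_path :: "nat set \<Rightarrow> nat set multiset \<Rightarrow> nat list \<Rightarrow> bool" where
  "mg_path V M xs \<longleftrightarrow> distinct xs \<and> xs \<noteq> [] \<and> set xs \<subseteq> V \<and>
     (\<forall>i. Suc i < length xs \<longrightarrow> {xs ! i, xs ! Suc i} \<in># M)"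

context
  fixes V :: "nat set" and M :: "nat set multiset"
  assumes multigraph: "multigraph V M" and acyclic: "\<nexists>C. mg_cycle V M C"
begin

lemma acyclic_edge_doubleton:
  assumes "e \<in># M"
  shows "\<exists>u w. u \<noteq> w \<and> e = {u, w}"
proof -
  have "e \<noteq> {}" "e \<subseteq> V" "card e \<le> 2"
    using multigraph assms by (auto simp: multigraph_def)
  moreover have "e \<noteq> {v}" for v
    using acyclic assms \<open>e \<subseteq> V\<close> unfolding mg_cycle_def by auto
  moreover have "finite e"
    using \<open>e \<subseteq> V\<close> multigraph finite_subset by (auto simp: multigraph_def)
  ultimately have "card e = 2"
    by (metis One_nat_def card_1_singleton_iff card_0_eq le_Suc_eq numeral_2_eq_2 le_zero_eq)
  then show ?thesis
    by (auto simp: card_2_iff)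
qed

lemma acyclic_other_neighbour:
  assumes "v \<in> V" and "2 \<le> mg_degree M v"
  shows "\<exists>w. {v, w} \<in># M \<and> w \<noteq> x"
proof (rule ccontr)
  assume no_other: "\<not> ?thesis"
  have "{#e \<in># M. v \<in> e#} = {#e \<in># M. e = {v, x}#}"
  proof (rule filter_mset_cong0)
    fix e assume "e \<in># M"
    then obtain u w where "u \<noteq> w" "e = {u, w}" using acyclic_edge_doubleton by blast
    then show "v \<in> e \<longleftrightarrow> e = {v, x}"
      using \<open>e \<in># M\<close> no_other by (auto simp: insert_commute)
  qed
  then have two: "2 \<le> count M {v, x}"
    using assms(2) by (simp add: mg_degree_def filter_eq_replicate_mset)
  then have "{v, x} \<in># M"
    by (simp add: count_inI)
  then have "v \<noteq> x" and "x \<in> V"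
    using acyclic_edge_doubleton multigraph by (fastforce simp: doubleton_eq_iff multigraph_def)+
  with two have "mg_cycle V M {v, x}"
    using assms(1) unfolding mg_cycle_def by blast
  then show False using acyclic by blast
qed

lemma acyclic_mg_path_extend:
  assumes "\<forall>v\<in>V. 2 \<le> mg_degree M v" and "mg_path V M xs"
  shows "\<exists>ys. mg_path V M ys \<and> length xs < length ys"
proof -
  define v where "v = hd xs"
  have xs: "distinct xs" "xs \<noteq> []" "set xs \<subseteq> V"
    "\<And>i. Suc i < length xs \<Longrightarrow> {xs ! i, xs ! Suc i} \<in># M"
    using assms(2) unfolding mg_path_def by auto
  then have "v \<in> V" "xs ! 0 = v" by (auto simp: v_def hd_conv_nth)
  \<comment> \<open>w is not the successor of v, so it extends the path or closes a cycle of length at least 3\<close>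
  obtain w where w: "{v, w} \<in># M" "w \<noteq> (if 2 \<le> length xs then xs ! 1 else v)"
    using acyclic_other_neighbour assms(1) \<open>v \<in> V\<close> by blast
  have "w \<noteq> v" "w \<in> V"
    using acyclic_edge_doubleton[OF w(1)] multigraph w(1) by (auto simp: multigraph_def)
  show ?thesis
  proof (cases "w \<in> set xs")
    case False
    have "mg_path V M (w # xs)"
      unfolding mg_path_def
    proof (intro conjI allI impI)
      fix i assume "Suc i < length (w # xs)"
      then show "{(w # xs) ! i, (w # xs) ! Suc i} \<in># M"
        using xs(4)[of "i - 1"] w(1) \<open>xs ! 0 = v\<close> by (cases i) (auto simp: insert_commute)
    qed (use False xs \<open>w \<in> V\<close> in auto)
    then show ?thesis by auto
  next
    case True
    then obtain j where j: "j < length xs" "xs ! j = w" by (auto simp: in_set_conv_nth)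
    have "2 \<le> j"
      using j w(2) \<open>w \<noteq> v\<close> \<open>xs ! 0 = v\<close> by (cases j; cases "j - 1") auto
    have "mg_cycle V M (set (take (Suc j) xs))"
      unfolding mg_cycle_def
    proof (intro disjI2 exI conjI allI impI)
      fix i assume "i < length (take (Suc j) xs)"
      moreover have "length (take (Suc j) xs) = Suc j" using j(1) by simp
      ultimately show "{take (Suc j) xs ! i, take (Suc j) xs ! ((i + 1) mod length (take (Suc j) xs))} \<in># M"
        using j w(1) xs(4)[of i] \<open>xs ! 0 = v\<close>
        by (cases "i = j") (auto simp: insert_commute)
    qed (use xs j \<open>2 \<le> j\<close> in \<open>auto dest: in_set_takeD\<close>)
    then show ?thesis using acyclic by blast
  qed
qed

lemma acyclic_has_low_degree_vertex:
  assumes "V \<noteq> {}"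
  shows "\<exists>v\<in>V. mg_degree M v \<le> 1"
proof (rule ccontr)
  assume "\<not> ?thesis"
  then have deg: "\<forall>v\<in>V. 2 \<le> mg_degree M v" by auto
  have "\<exists>xs. mg_path V M xs \<and> n \<le> length xs" for n
  proof (induction n)
    case 0
    obtain v where "v \<in> V" using assms by blast
    then have "mg_path V M [v]" by (simp add: mg_path_def)
    then show ?case by blast
  next
    case (Suc n)
    then obtain xs where "mg_path V M xs" "n \<le> length xs" by blast
    then obtain ys where "mg_path V M ys" "length xs < length ys"
      using acyclic_mg_path_extend[OF deg] by blast
    then show ?case using \<open>n \<le> length xs\<close> by (intro exI[of _ ys]) simp
  qed
  then obtain xs where xs: "mg_path V M xs" "Suc (card V) \<le> length xs" by blast
  have "length xs \<le> card V"
    using xs(1) multigraph unfolding mg_path_def multigraph_def by (metis card_mono distinct_card)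
  then show False using xs(2) by simp
qed

end

lemma acyclic_size_le_card:
  assumes "multigraph V M" and "\<nexists>C. mg_cycle V M C"
  shows "size M \<le> card V"
  using assms
proof (induction "card V" arbitrary: V M rule: less_induct)
  case less
  show ?case
  proof (cases "V = {}")
    case True
    then show ?thesis using less.prems(1) by (auto simp: multigraph_def)
  next
    case False
    then obtain v where v: "v \<in> V" "mg_degree M v \<le> 1"
      using acyclic_has_low_degree_vertex less.prems by blast
    define M' where "M' = {#e \<in># M. v \<notin> e#}"
    have "multigraph (V - {v}) M'"
      using less.prems(1) unfolding multigraph_def M'_def by auto
    moreover have "\<nexists>C. mg_cycle (V - {v}) M' C"
      using less.prems(2) mg_cycle_mono[of "V - {v}" M' _ V M] by (auto simp: M'_def)
    moreover have fin: "finite V" using less.prems(1) by (simp add: multigraph_def)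
    ultimately have "size M' \<le> card (V - {v})"
      using less.hyps v(1) by (meson card_Diff1_less)
    moreover have "size M = size M' + mg_degree M v"
      unfolding M'_def mg_degree_def by (metis add.commute multiset_partition size_union)
    moreover have "card V > 0" using v(1) fin card_gt_0_iff by blast
    ultimately show ?thesis using v fin by simp
  qed
qed

lemma size_le_card_if_avoids_hitting_set:
  assumes "multigraph V M" and "\<forall>C. mg_cycle V M C \<longrightarrow> C \<inter> Y \<noteq> {}"
    and "M' \<subseteq># M" and "\<forall>e\<in>#M'. e \<inter> Y = {}"
  shows "size M' \<le> card (V - Y)"
proof (rule acyclic_size_le_card)
  show "multigraph (V - Y) M'"
    using assms(1,3,4) unfolding multigraph_def by (auto dest: mset_subset_eqD)
  show "\<nexists>C. mg_cycle (V - Y) M' C"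
    using assms(2,3) mg_cycle_mono mg_cycle_subset by blast
qed

definition mg_linked :: "nat set multiset \<Rightarrow> nat set \<Rightarrow> nat \<Rightarrow> nat \<Rightarrow> bool" where
  "mg_linked M C x y \<longleftrightarrow> (\<exists>e\<in>#M. e \<subseteq> C \<and> x \<in> e \<and> y \<in> e)"

lemma symp_mg_linked: "symp (mg_linked M C)"
  unfolding symp_def mg_linked_def by blast

lemma cyclic_list_first_edge_linked:
  assumes xs: "distinct xs" "length xs \<ge> 3"
    "\<forall>i < length xs. {xs ! i, xs ! ((i + 1) mod length xs)} \<in># M"
  defines "e \<equiv> {xs ! 0, xs ! 1}"
  shows "(mg_linked (M - {#e#}) (set xs))\<^sup>*\<^sup>* (xs ! 0) (xs ! 1)"
proof -
  define k where "k = length xs"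
  \<comment> \<open>the walk xs ! 1, ..., xs ! (k - 1), xs ! 0 around the cycle uses every edge but e\<close>
  define ys where "ys = xs @ [xs ! 0]"
  have ys: "ys ! j = xs ! j" "ys ! Suc j = xs ! ((j + 1) mod k)" if "j < k" for j
    using that by (auto simp: ys_def k_def nth_append mod_if)
  have "{xs ! j, xs ! ((j + 1) mod k)} \<noteq> e" if "1 \<le> j" "j < k" for j
  proof
    assume same: "{xs ! j, xs ! ((j + 1) mod k)} = e"
    have ix: "0 < k" "1 < k" "2 < k" using xs(2) k_def by auto
    have "xs ! j \<in> {xs ! 0, xs ! 1}"
      using same unfolding e_def by blast
    then have "j = 1"
      using that ix xs(1) unfolding k_def by (auto simp: nth_eq_iff_index_eq)
    then have "(j + 1) mod k = 2"
      using ix by simp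
    then have "xs ! 2 \<in> {xs ! 0, xs ! 1}"
      using same unfolding e_def by (metis insertCI)
    then show False
      using ix xs(1) unfolding k_def by (simp add: nth_eq_iff_index_eq)
  qed
  then have "mg_linked (M - {#e#}) (set xs) (ys ! j) (ys ! Suc j)" if "1 \<le> j" "j < k" for j
    using that xs(3) ys unfolding mg_linked_def k_def
    by (intro bexI[of _ "{xs ! j, xs ! ((j + 1) mod length xs)}"])
      (auto simp: in_diff_count intro!: nth_mem mod_less_divisor)
  then have "(mg_linked (M - {#e#}) (set xs))\<^sup>*\<^sup>* (ys ! 1) (ys ! k)"
    using xs(2) k_def by (intro rtranclp_nth_chain) auto
  moreover have "ys ! 1 = xs ! 1" "ys ! k = xs ! 0"
    using xs(2) by (auto simp: ys_def k_def nth_append)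
  ultimately show ?thesis
    using sympD[OF symp_rtranclp[OF symp_mg_linked]] by metis
qed

lemma mg_cycle_has_linked_edge:
  assumes "mg_cycle V M C"
  shows "\<exists>e\<in>#M. e \<subseteq> C \<and> (\<forall>x\<in>e. \<forall>y\<in>e. (mg_linked (M - {#e#}) C)\<^sup>*\<^sup>* x y)"
  using assms unfolding mg_cycle_def
proof (elim disjE bexE conjE exE)
  fix v assume "C = {v}" "{v} \<in># M"
  then show ?thesis by (intro bexI[of _ "{v}"]) simp_all
next
  fix u v assume uv: "C = {u, v}" "2 \<le> count M {u, v}"
  then have "mg_linked (M - {#{u, v}#}) C x y" if "x \<in> {u, v}" "y \<in> {u, v}" for x y
    using that unfolding mg_linked_def by (intro bexI[of _ "{u, v}"]) (auto simp: in_diff_count)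
  moreover have "{u, v} \<in># M" using uv(2) by (simp add: count_inI)
  ultimately show ?thesis using uv(1) by blast
next
  fix xs assume xs: "distinct xs" "length xs \<ge> 3" "C = set xs"
    "\<forall>i < length xs. {xs ! i, xs ! ((i + 1) mod length xs)} \<in># M"
  define e where "e = {xs ! 0, xs ! 1}"
  have "(mg_linked (M - {#e#}) C)\<^sup>*\<^sup>* (xs ! 0) (xs ! 1)"
    unfolding e_def xs(3) by (rule cyclic_list_first_edge_linked[OF xs(1,2,4)])
  moreover have "(mg_linked (M - {#e#}) C)\<^sup>*\<^sup>* (xs ! 1) (xs ! 0)"
    using calculation by (rule sympD[OF symp_rtranclp[OF symp_mg_linked]])
  ultimately have "\<forall>x\<in>e. \<forall>y\<in>e. (mg_linked (M - {#e#}) C)\<^sup>*\<^sup>* x y"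
    unfolding e_def by auto
  moreover have "e \<in># M"
    using xs(4)[rule_format, of 0] xs(2) unfolding e_def by force
  moreover have "e \<subseteq> C"
    using xs(2,3) unfolding e_def by (auto intro!: nth_mem)
  ultimately show ?thesis by blast
qed

section \<open>Cycles through an edge\<close>

definition induced_adj :: "'a set \<Rightarrow> 'a set set \<Rightarrow> 'a \<Rightarrow> 'a \<Rightarrow> bool" where
  "induced_adj W E x y \<longleftrightarrow> x \<in> W \<and> y \<in> W \<and> {x, y} \<in> E"

lemma symp_induced_adj: "symp (induced_adj W E)"
  unfolding symp_def induced_adj_def by (simp add: insert_commute)

lemmas induced_adj_rtranclp_sym = sympD[OF symp_rtranclp[OF symp_induced_adj]]

lemma rtrancl_path_induced_adj_subset:
  "rtrancl_path (induced_adj W E) a ys b \<Longrightarrow> set ys \<subseteq> W"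
  by (induction rule: rtrancl_path.induct) (auto simp: induced_adj_def)

lemma cycle_if_linked_avoiding_edge:
  assumes "a \<noteq> b" and "{a, b} \<in> E" and "W \<subseteq> V"
    and "(induced_adj W (E - {{a, b}}))\<^sup>*\<^sup>* a b"
  shows "\<exists>cyc. is_cycle V E cyc \<and> set cyc \<subseteq> W"
proof -
  let ?R = "induced_adj W (E - {{a, b}})"
  from assms(4) obtain zs where "rtrancl_path ?R a zs b"
    by (auto simp: rtranclp_eq_rtrancl_path)
  then obtain ys where ys: "rtrancl_path ?R a ys b" "distinct (a # ys)"
    by (rule rtrancl_path_distinct)
  have "ys \<noteq> []"
    using ys(1) assms(1) by (auto elim: rtrancl_path.cases)
  then have last: "ys ! (length ys - 1) = b"
    using rtrancl_path_last[OF ys(1)] by (simp add: last_conv_nth)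
  have step: "?R ((a # ys) ! n) (ys ! n)" if "n < length ys" for n
    using rtrancl_path_nth[OF ys(1) that] .
  have "length ys \<noteq> 1"
  proof
    assume "length ys = 1"
    then have "?R a b" using step[of 0] last by simp
    then show False unfolding induced_adj_def by simp
  qed
  have "set (a # ys) \<subseteq> W"
    using rtrancl_path_induced_adj_subset[OF ys(1)] step[of 0] \<open>ys \<noteq> []\<close>
    by (simp add: induced_adj_def)
  moreover have "is_cycle V E (a # ys)"
    unfolding is_cycle_def
  proof (intro conjI allI impI)
    fix n assume n: "n < length (a # ys)"
    show "{(a # ys) ! n, (a # ys) ! ((n + 1) mod length (a # ys))} \<in> E"
    proof (cases "n < length ys")
      case True
      then show ?thesis using step[OF True] by (simp add: induced_adj_def)
    next
      case False
      then have "n = length ys" using n by simp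
      then show ?thesis using last assms(2) \<open>ys \<noteq> []\<close>
        by (cases ys) (auto simp: insert_commute)
    qed
  next
    show "distinct (a # ys)" by (rule ys(2))
    show "3 \<le> length (a # ys)"
      using \<open>ys \<noteq> []\<close> \<open>length ys \<noteq> 1\<close> by (cases ys) (auto simp: Suc_le_eq)
    show "set (a # ys) \<subseteq> V"
      using calculation assms(3) by (rule subset_trans)
  qed
  ultimately show ?thesis by blast
qed

lemma cycle_if_path_ends_linked:
  assumes "is_path W E P" and "Suc i < length P" and "W \<subseteq> V"
    and "(induced_adj W (E - {{P ! i, P ! Suc i}}))\<^sup>*\<^sup>* (hd P) (last P)"
  shows "\<exists>cyc. is_cycle V E cyc \<and> set cyc \<subseteq> W"
proof -
  let ?R = "induced_adj W (E - {{P ! i, P ! Suc i}})"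
  have P: "distinct P" "P \<noteq> []" "set P \<subseteq> W"
    "\<And>k. Suc k < length P \<Longrightarrow> {P ! k, P ! Suc k} \<in> E"
    using assms(1) unfolding is_path_def by auto
  have "{P ! k, P ! Suc k} \<noteq> {P ! i, P ! Suc i}" if "Suc k < length P" "k \<noteq> i" for k
  proof
    assume "{P ! k, P ! Suc k} = {P ! i, P ! Suc i}"
    then have "P ! k = P ! i \<or> P ! k = P ! Suc i \<and> P ! Suc k = P ! i"
      by (auto simp: doubleton_eq_iff)
    then have "k = i \<or> k = Suc i \<and> Suc k = i"
      using that(1) assms(2) P(1) by (simp add: nth_eq_iff_index_eq)
    then show False using that(2) by auto
  qed
  then have R: "?R (P ! k) (P ! Suc k)" if "Suc k < length P" "k \<noteq> i" for k
    using that P(3,4) unfolding induced_adj_def by (auto intro!: nth_mem)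
  have "?R\<^sup>*\<^sup>* (P ! 0) (P ! i)"
    using R assms(2) by (intro rtranclp_nth_chain) auto
  then have "?R\<^sup>*\<^sup>* (P ! i) (hd P)"
    unfolding hd_conv_nth[OF P(2)] by (rule induced_adj_rtranclp_sym)
  also have "?R\<^sup>*\<^sup>* (hd P) (last P)"
    by (rule assms(4))
  also have "?R\<^sup>*\<^sup>* (P ! Suc i) (P ! (length P - 1))"
    using R assms(2) by (intro rtranclp_nth_chain) auto
  then have "?R\<^sup>*\<^sup>* (last P) (P ! Suc i)"
    unfolding last_conv_nth[OF P(2)] by (rule induced_adj_rtranclp_sym)
  finally have linked: "?R\<^sup>*\<^sup>* (P ! i) (P ! Suc i)" .
  have "P ! i \<noteq> P ! Suc i"
    using P(1) assms(2) by (simp add: nth_eq_iff_index_eq)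
  then show ?thesis
    using P(4)[OF assms(2)] assms(3) linked by (rule cycle_if_linked_avoiding_edge)
qed

section \<open>Monic plantations with a normal set of transitions\<close>

context
  fixes s :: nat and V :: "'a set" and E :: "'a set set" and Z :: "'a set" and S :: "'a list set"
  assumes monic: "monic_plantation s V E Z" and normal: "normal_set V E Z S"
begin

lemma finite_V: "finite V"
  using monic by (simp add: monic_plantation_def plantation_def graph_def)

lemma Z_subset_V: "Z \<subseteq> V"
  using monic by (simp add: monic_plantation_def plantation_def cycle_hitting_def)

lemma finite_Z: "finite Z"
  using finite_V Z_subset_V by (rule finite_subset[rotated])

lemma transition_if_in_S:
  assumes "P \<in> S"
  shows "is_path (V - Z) E P" "path_ends P \<subseteq> attach V E Z"
    "\<And>i. 0 < i \<Longrightarrow> i < length P - 1 \<Longrightarrow> P ! i \<notin> attach V E Z"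
proof -
  have "transition V E Z P"
    using normal assms unfolding normal_set_def by blast
  then show "is_path (V - Z) E P" "path_ends P \<subseteq> attach V E Z"
    "\<And>i. 0 < i \<Longrightarrow> i < length P - 1 \<Longrightarrow> P ! i \<notin> attach V E Z"
    unfolding transition_def path_ends_def by auto
qed

lemma finite_S: "finite S"
proof (rule finite_subset)
  show "S \<subseteq> {xs. set xs \<subseteq> V \<and> distinct xs}"
    using transition_if_in_S(1) unfolding is_path_def by blast
  show "finite {xs. set xs \<subseteq> V \<and> distinct xs}"
    using finite_V by (rule finite_subset_distinct)
qed

lemma end_has_foot:
  assumes "P \<in> S" and "x \<in> path_ends P"
  shows "\<exists>z\<in>feet E Z P. {x, z} \<in> E"
  using transition_if_in_S(2)[OF assms(1)] assms(2) unfolding attach_def feet_def by blast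

lemma foot_if_adjacent:
  assumes "P \<in> S" and "x \<in> set P" and "z \<in> Z" and "{x, z} \<in> E"
  shows "z \<in> feet E Z P"
proof -
  obtain i where i: "i < length P" "P ! i = x"
    using assms(2) by (auto simp: in_set_conv_nth)
  have "x \<in> attach V E Z"
    using transition_if_in_S(1)[OF assms(1)] assms(2-4) unfolding is_path_def attach_def by blast
  then have "\<not> (0 < i \<and> i < length P - 1)"
    using transition_if_in_S(3)[OF assms(1)] i(2) by blast
  then have "i = 0 \<or> i = length P - 1" using i(1) by linarith
  then have "x \<in> path_ends P"
    using i by (cases P) (auto simp: path_ends_def hd_conv_nth last_conv_nth)
  then show ?thesis unfolding feet_def using assms(3,4) by blast
qed

lemma card_feet_le_2:
  assumes "P \<in> S"
  shows "card (feet E Z P) \<le> 2"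
proof -
  have one: "card {z \<in> Z. {x, z} \<in> E} = 1" if "x \<in> path_ends P" for x
    using monic transition_if_in_S(2)[OF assms] that unfolding monic_plantation_def by blast
  have "feet E Z P = {z \<in> Z. {hd P, z} \<in> E} \<union> {z \<in> Z. {last P, z} \<in> E}"
    unfolding feet_def path_ends_def by blast
  then have "card (feet E Z P) \<le> card {z \<in> Z. {hd P, z} \<in> E} + card {z \<in> Z. {last P, z} \<in> E}"
    by (simp add: card_Un_le)
  then show ?thesis
    using one[of "hd P"] one[of "last P"] by (simp add: path_ends_def)
qed

lemma anticomplete_if_feet_disjoint:
  assumes "P \<in> S" and "Q \<in> S" and "feet E Z P \<inter> feet E Z Q = {}"
  shows "anticomplete E (set P) (set Q)"
proof -
  have "P \<noteq> Q"
    using end_has_foot[OF assms(1), of "hd P"] assms(3) by (auto simp: path_ends_def)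
  moreover have "path_ends P \<inter> path_ends Q = {}"
  proof (rule ccontr)
    assume "path_ends P \<inter> path_ends Q \<noteq> {}"
    then obtain x where "x \<in> path_ends P" "x \<in> path_ends Q" by blast
    then obtain z where "z \<in> feet E Z P" "{x, z} \<in> E"
      using end_has_foot[OF assms(1)] by blast
    then have "z \<in> feet E Z Q"
      using \<open>x \<in> path_ends Q\<close> unfolding feet_def by blast
    then show False using \<open>z \<in> feet E Z P\<close> assms(3) by blast
  qed
  ultimately show ?thesis
    using normal assms(1,2) unfolding normal_set_def by blast
qed

definition region :: "'a set \<Rightarrow> 'a set" where
  "region C = C \<union> (\<Union>Q\<in>{Q \<in> S. feet E Z Q \<subseteq> C}. set Q)"

lemma set_subset_region: "P \<in> S \<Longrightarrow> feet E Z P \<subseteq> C \<Longrightarrow> set P \<subseteq> region C"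
  unfolding region_def by blast

lemma region_subset_V: "C \<subseteq> Z \<Longrightarrow> region C \<subseteq> V"
  using Z_subset_V transition_if_in_S(1) unfolding region_def is_path_def by blast

lemma region_separated_from_feet:
  assumes "C \<subseteq> Z" and "D \<subseteq> Z" and "C \<inter> D = {}" and "a \<in> C" and "b \<in> region D"
  shows "a \<noteq> b \<and> {a, b} \<notin> E"
  using assms(5) unfolding region_def
proof (elim UnE UN_E CollectE conjE)
  assume "b \<in> D"
  then show ?thesis
    using assms(1-4) monic unfolding monic_plantation_def stable_def by blast
next
  fix Q assume Q: "Q \<in> S" "feet E Z Q \<subseteq> D" "b \<in> set Q"
  then have "b \<notin> Z"
    using transition_if_in_S(1) unfolding is_path_def by blast
  moreover have "{a, b} \<notin> E"
  proof
    assume "{a, b} \<in> E"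
    then have "a \<in> feet E Z Q"
      using foot_if_adjacent[OF Q(1,3), of a] assms(1,4) by (simp add: insert_commute subsetD)
    then show False using Q(2) assms(3,4) by blast
  qed
  ultimately show ?thesis using assms(1,4) by blast
qed

lemma anticomplete_regions:
  assumes "C \<subseteq> Z" and "D \<subseteq> Z" and "C \<inter> D = {}"
  shows "anticomplete E (region C) (region D)"
proof -
  have "a \<noteq> b \<and> {a, b} \<notin> E" if a: "a \<in> region C" and b: "b \<in> region D" for a b
  proof (cases "a \<in> C")
    case True
    then show ?thesis using region_separated_from_feet[OF assms(1-3) _ b] by blast
  next
    case a_not_C: False
    show ?thesis
    proof (cases "b \<in> D")
      case True
      have "D \<inter> C = {}" using assms(3) by blast
      from region_separated_from_feet[OF assms(2,1) this True a] show ?thesis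
        by (auto simp: insert_commute)
    next
      case False
      with a_not_C obtain P Q where "P \<in> S" "feet E Z P \<subseteq> C" "a \<in> set P"
        "Q \<in> S" "feet E Z Q \<subseteq> D" "b \<in> set Q"
        using a b unfolding region_def by blast
      then have "anticomplete E (set P) (set Q)"
        using assms(3) by (intro anticomplete_if_feet_disjoint) auto
      then show ?thesis
        using \<open>a \<in> set P\<close> \<open>b \<in> set Q\<close> unfolding anticomplete_def by blast
    qed
  qed
  then show ?thesis unfolding anticomplete_def by blast
qed

lemma path_ends_subset_region:
  assumes "Q \<in> S" and "feet E Z Q \<subseteq> C"
  shows "path_ends Q \<subseteq> region C"
proof -
  have "Q \<noteq> []"
    using transition_if_in_S(1)[OF assms(1)] unfolding is_path_def by blast
  then have "path_ends Q \<subseteq> set Q"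
    unfolding path_ends_def by simp
  then show ?thesis
    using set_subset_region[OF assms] by blast
qed

lemma induced_adj_region_foot:
  assumes "C \<subseteq> Z" and "e \<inter> Z = {}" and "x \<in> region C" and "z \<in> C" and "{x, z} \<in> E"
  shows "induced_adj (region C) (E - {e}) x z"
  using assms unfolding induced_adj_def region_def by blast

lemma feet_linked_avoiding_edge:
  assumes "C \<subseteq> Z" and "e \<inter> Z = {}" and "Q \<in> S" and "feet E Z Q \<subseteq> C" and "e \<notin> path_edges Q"
    and "z \<in> feet E Z Q" and "z' \<in> feet E Z Q"
  shows "(induced_adj (region C) (E - {e}))\<^sup>*\<^sup>* z z'"
proof -
  let ?R = "induced_adj (region C) (E - {e})"
  have Q: "set Q \<subseteq> region C" "Q \<noteq> []" "\<And>k. Suc k < length Q \<Longrightarrow> {Q ! k, Q ! Suc k} \<in> E"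
    using set_subset_region[OF assms(3,4)] transition_if_in_S(1)[OF assms(3)]
    unfolding is_path_def by auto
  have "?R (Q ! k) (Q ! Suc k)" if "Suc k < length Q" for k
    using that Q assms(5) unfolding induced_adj_def path_edges_def by (auto intro!: nth_mem)
  then have "?R\<^sup>*\<^sup>* (Q ! 0) (Q ! (length Q - 1))"
    using Q(2) by (intro rtranclp_nth_chain) auto
  then have hd_last: "?R\<^sup>*\<^sup>* (hd Q) (last Q)"
    using Q(2) by (simp add: hd_conv_nth last_conv_nth)
  have to_hd: "?R\<^sup>*\<^sup>* (hd Q) y" if y: "y \<in> feet E Z Q" for y
  proof -
    obtain x where x: "x \<in> path_ends Q" "{x, y} \<in> E"
      using y unfolding feet_def by blast
    have "?R\<^sup>*\<^sup>* (hd Q) x"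
      using x(1) hd_last unfolding path_ends_def by auto
    moreover have "?R x y"
      using induced_adj_region_foot[OF assms(1,2) _ _ x(2)] path_ends_subset_region[OF assms(3,4)]
        x(1) y assms(4) by blast
    ultimately show ?thesis
      by (rule rtranclp.rtrancl_into_rtrancl)
  qed
  show ?thesis
    using induced_adj_rtranclp_sym[OF to_hd[OF assms(6)]] to_hd[OF assms(7)] by (rule rtranclp_trans)
qed

definition linked_by_others :: "'a set \<Rightarrow> 'a list \<Rightarrow> 'a \<Rightarrow> 'a \<Rightarrow> bool" where
  "linked_by_others C P z z' \<longleftrightarrow>
     (\<exists>Q\<in>S - {P}. feet E Z Q \<subseteq> C \<and> z \<in> feet E Z Q \<and> z' \<in> feet E Z Q)"

lemma region_has_cycle:
  assumes "C \<subseteq> Z" and "P \<in> S" and "feet E Z P \<subseteq> C"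
    and linked: "\<forall>z\<in>feet E Z P. \<forall>z'\<in>feet E Z P. (linked_by_others C P)\<^sup>*\<^sup>* z z'"
  shows "\<exists>cyc. is_cycle V E cyc \<and> set cyc \<subseteq> region C"
proof -
  obtain e where "e \<in> path_edges P" and private_e: "\<forall>Q\<in>S. Q \<noteq> P \<longrightarrow> e \<notin> path_edges Q"
    using normal assms(2) unfolding normal_set_def by blast
  then obtain i where i: "Suc i < length P" and e: "e = {P ! i, P ! Suc i}"
    unfolding path_edges_def by blast
  let ?R = "induced_adj (region C) (E - {e})"
  have "P ! i \<in> set P" "P ! Suc i \<in> set P"
    using i by simp_all
  then have eZ: "e \<inter> Z = {}"
    using transition_if_in_S(1)[OF assms(2)] unfolding e is_path_def by blast
  have "linked_by_others C P \<le> ?R\<^sup>*\<^sup>*"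
  proof (intro predicate2I)
    fix z z' assume "linked_by_others C P z z'"
    then obtain Q where "Q \<in> S" "Q \<noteq> P" "feet E Z Q \<subseteq> C" "z \<in> feet E Z Q" "z' \<in> feet E Z Q"
      unfolding linked_by_others_def by blast
    then show "?R\<^sup>*\<^sup>* z z'"
      using private_e by (intro feet_linked_avoiding_edge[OF assms(1) eZ]) auto
  qed
  then have "(linked_by_others C P)\<^sup>*\<^sup>* \<le> (?R\<^sup>*\<^sup>*)\<^sup>*\<^sup>*"
    by (rule rtranclp_mono)
  then have closure_le: "(linked_by_others C P)\<^sup>*\<^sup>* \<le> ?R\<^sup>*\<^sup>*"
    by simp
  have feet_linked: "?R\<^sup>*\<^sup>* z z'" if "z \<in> feet E Z P" "z' \<in> feet E Z P" for z z'
    using predicate2D[OF closure_le] linked that by blast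
  have end_to_foot: "\<exists>z\<in>feet E Z P. ?R x z" if x: "x \<in> path_ends P" for x
  proof -
    obtain z where z: "z \<in> feet E Z P" "{x, z} \<in> E"
      using end_has_foot[OF assms(2) x] by blast
    have "x \<in> region C"
      using path_ends_subset_region[OF assms(2,3)] x by blast
    moreover have "z \<in> C"
      using z(1) assms(3) by blast
    ultimately have "?R x z"
      using z(2) by (rule induced_adj_region_foot[OF assms(1) eZ])
    with z(1) show ?thesis by blast
  qed
  obtain zh zl where zh: "zh \<in> feet E Z P" "?R (hd P) zh" and zl: "zl \<in> feet E Z P" "?R (last P) zl"
    using end_to_foot unfolding path_ends_def by blast
  have "?R zl (last P)"
    using zl(2) by (rule sympD[OF symp_induced_adj])
  with feet_linked[OF zh(1) zl(1)] have "?R\<^sup>*\<^sup>* zh (last P)"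
    by (rule rtranclp.rtrancl_into_rtrancl)
  with zh(2) have "?R\<^sup>*\<^sup>* (hd P) (last P)"
    by (rule converse_rtranclp_into_rtranclp)
  moreover have "is_path (region C) E P"
    using transition_if_in_S(1)[OF assms(2)] set_subset_region[OF assms(2,3)]
    unfolding is_path_def by blast
  ultimately show ?thesis
    unfolding e using cycle_if_path_ends_linked[OF _ i region_subset_V[OF assms(1)]] by blast
qed

(* EP_bound speaks about multigraphs on nat, hence the injection h. *)
context
  fixes h :: "'a \<Rightarrow> nat"
  assumes inj_h: "inj_on h Z"
begin

definition foot_edge :: "'a list \<Rightarrow> nat set" where
  "foot_edge P = h ` feet E Z P"

definition foot_graph :: "nat set multiset" where
  "foot_graph = image_mset foot_edge (mset_set S)"

lemma feet_eq_vimage_foot_edge: "feet E Z P = {z \<in> Z. h z \<in> foot_edge P}"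
  unfolding foot_edge_def feet_def by (auto simp: inj_on_eq_iff[OF inj_h])

lemma in_foot_graph_iff: "e \<in># foot_graph \<longleftrightarrow> (\<exists>P\<in>S. e = foot_edge P)"
  using finite_S unfolding foot_graph_def by auto

lemma multigraph_foot_graph: "multigraph (h ` Z) foot_graph"
  unfolding multigraph_def
proof (intro conjI ballI)
  show "finite (h ` Z)"
    using finite_Z by simp
  fix e assume "e \<in># foot_graph"
  then obtain P where P: "P \<in> S" "e = foot_edge P"
    by (auto simp: in_foot_graph_iff)
  show "e \<noteq> {}"
    using end_has_foot[OF P(1), of "hd P"] P(2) by (auto simp: foot_edge_def path_ends_def)
  show "e \<subseteq> h ` Z"
    using P(2) unfolding foot_edge_def feet_def by blast
  have "card e \<le> card (feet E Z P)"
    unfolding P(2) foot_edge_def by (rule card_image_le) (use finite_Z in \<open>simp add: feet_def\<close>)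
  then show "card e \<le> 2"
    using card_feet_le_2[OF P(1)] by simp
qed

lemma foot_graph_remove:
  "P \<in> S \<Longrightarrow> foot_graph - {#foot_edge P#} = image_mset foot_edge (mset_set (S - {P}))"
  using finite_S unfolding foot_graph_def by (simp add: mset_set_Diff image_mset_Diff)

lemma region_has_cycle_if_mg_cycle:
  assumes "mg_cycle (h ` Z) foot_graph C"
  shows "\<exists>cyc. is_cycle V E cyc \<and> set cyc \<subseteq> region {z \<in> Z. h z \<in> C}"
proof -
  define C' where "C' = {z \<in> Z. h z \<in> C}"
  obtain P where P: "P \<in> S" "foot_edge P \<subseteq> C"
    and linked: "\<forall>x\<in>foot_edge P. \<forall>y\<in>foot_edge P.
      (mg_linked (foot_graph - {#foot_edge P#}) C)\<^sup>*\<^sup>* x y"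
    using mg_cycle_has_linked_edge[OF assms] by (auto simp: in_foot_graph_iff)
  have feet_C': "feet E Z Q \<subseteq> C'" if "foot_edge Q \<subseteq> C" for Q
    using that feet_eq_vimage_foot_edge[of Q] unfolding C'_def by blast
  have "(linked_by_others C' P)\<^sup>*\<^sup>* z z'" if "z \<in> feet E Z P" "z' \<in> feet E Z P" for z z'
  proof (rule rtranclp_pullback[OF inj_h])
    show "(mg_linked (foot_graph - {#foot_edge P#}) C)\<^sup>*\<^sup>* (h z) (h z')"
      using linked that unfolding foot_edge_def by blast
    show "z \<in> Z" "z' \<in> Z"
      using that unfolding feet_def by auto
  next
    fix x y assume "mg_linked (foot_graph - {#foot_edge P#}) C x y"
    then show "x \<in> h ` Z \<and> y \<in> h ` Z"
      unfolding mg_linked_def foot_graph_remove[OF P(1)]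
      using finite_S by (auto simp: foot_edge_def feet_def)
  next
    fix a b assume "a \<in> Z" "b \<in> Z" "mg_linked (foot_graph - {#foot_edge P#}) C (h a) (h b)"
    then obtain Q where "Q \<in> S - {P}" "foot_edge Q \<subseteq> C" "h a \<in> foot_edge Q" "h b \<in> foot_edge Q"
      unfolding mg_linked_def foot_graph_remove[OF P(1)] using finite_S by auto
    then show "linked_by_others C' P a b"
      unfolding linked_by_others_def using feet_C' feet_eq_vimage_foot_edge \<open>a \<in> Z\<close> \<open>b \<in> Z\<close>
      by blast
  qed
  then show ?thesis
    using region_has_cycle[of C' P] P feet_C' unfolding C'_def by blast
qed

lemma foot_graph_no_s_disjoint_cycles:
  "\<nexists>Cs. length Cs = s \<and> (\<forall>C\<in>set Cs. mg_cycle (h ` Z) foot_graph C) \<and>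
      (\<forall>i < s. \<forall>j < s. i \<noteq> j \<longrightarrow> Cs ! i \<inter> Cs ! j = {})"
proof
  assume "\<exists>Cs. length Cs = s \<and> (\<forall>C\<in>set Cs. mg_cycle (h ` Z) foot_graph C) \<and>
      (\<forall>i < s. \<forall>j < s. i \<noteq> j \<longrightarrow> Cs ! i \<inter> Cs ! j = {})"
  then obtain Cs where Cs: "length Cs = s" "\<forall>C\<in>set Cs. mg_cycle (h ` Z) foot_graph C"
      "\<forall>i < s. \<forall>j < s. i \<noteq> j \<longrightarrow> Cs ! i \<inter> Cs ! j = {}"
    by blast
  have "\<forall>C\<in>set Cs. \<exists>cyc. is_cycle V E cyc \<and> set cyc \<subseteq> region {z \<in> Z. h z \<in> C}"
    using Cs(2) region_has_cycle_if_mg_cycle by blast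
  then obtain F where F: "\<forall>C\<in>set Cs. is_cycle V E (F C) \<and> set (F C) \<subseteq> region {z \<in> Z. h z \<in> C}"
    by (auto dest!: bchoice)
  have "anticomplete E (set (map F Cs ! i)) (set (map F Cs ! j))"
    if "i < s" "j < s" "i \<noteq> j" for i j
  proof -
    have "anticomplete E (region {z \<in> Z. h z \<in> Cs ! i}) (region {z \<in> Z. h z \<in> Cs ! j})"
      using Cs(3) that by (intro anticomplete_regions) auto
    moreover have "set (map F Cs ! i) \<subseteq> region {z \<in> Z. h z \<in> Cs ! i}"
      "set (map F Cs ! j) \<subseteq> region {z \<in> Z. h z \<in> Cs ! j}"
      using F Cs(1) that by auto
    ultimately show ?thesis
      unfolding anticomplete_def by blast
  qed
  moreover have "\<forall>C\<in>set (map F Cs). is_cycle V E C" "length (map F Cs) = s"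
    using F Cs(1) by auto
  ultimately have "\<exists>Ds. length Ds = s \<and> (\<forall>D\<in>set Ds. is_cycle V E D) \<and>
      (\<forall>i < s. \<forall>j < s. i \<noteq> j \<longrightarrow> anticomplete E (set (Ds ! i)) (set (Ds ! j)))"
    by (intro exI[of _ "map F Cs"]) blast
  then have "\<not> sO_free s V E"
    unfolding sO_free_def by blast
  then show False
    using monic unfolding monic_plantation_def plantation_def by blast
qed

lemma card_footless_le_card:
  assumes "\<forall>C. mg_cycle (h ` Z) foot_graph C \<longrightarrow> C \<inter> Y \<noteq> {}"
  shows "card {P \<in> S. feet E Z P \<inter> {z \<in> Z. h z \<in> Y} = {}} \<le> card Z"
proof -
  define T where "T = {P \<in> S. feet E Z P \<inter> {z \<in> Z. h z \<in> Y} = {}}"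
  have "finite T"
    using finite_S unfolding T_def by simp
  have "size (image_mset foot_edge (mset_set T)) \<le> card (h ` Z - Y)"
  proof (rule size_le_card_if_avoids_hitting_set[OF multigraph_foot_graph assms])
    show "image_mset foot_edge (mset_set T) \<subseteq># foot_graph"
      unfolding foot_graph_def T_def
      by (intro image_mset_subseteq_mono subset_imp_msubset_mset_set) (use finite_S in auto)
    show "\<forall>e\<in>#image_mset foot_edge (mset_set T). e \<inter> Y = {}"
      using \<open>finite T\<close> unfolding T_def foot_edge_def feet_def by auto
  qed
  also have "\<dots> \<le> card (h ` Z)"
    using finite_Z by (intro card_mono) auto
  also have "\<dots> \<le> card Z"
    by (rule card_image_le[OF finite_Z])
  finally show ?thesis
    unfolding T_def by simp
qed

lemma ex_small_foot_set:
  assumes "EP_bound s phi"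
  shows "\<exists>X\<subseteq>Z. card X \<le> phi \<and> card {P \<in> S. feet E Z P \<inter> X = {}} \<le> card Z"
proof -
  have "\<exists>Y\<subseteq>h ` Z. card Y \<le> phi \<and> (\<forall>C. mg_cycle (h ` Z) foot_graph C \<longrightarrow> C \<inter> Y \<noteq> {})"
    using assms[unfolded EP_bound_def, rule_format,
        OF conjI[OF multigraph_foot_graph foot_graph_no_s_disjoint_cycles]] .
  then obtain Y where Y: "Y \<subseteq> h ` Z" "card Y \<le> phi"
    "\<forall>C. mg_cycle (h ` Z) foot_graph C \<longrightarrow> C \<inter> Y \<noteq> {}"
    by blast
  define X where "X = {z \<in> Z. h z \<in> Y}"
  have "card X = card (h ` X)"
    using inj_h unfolding X_def by (simp add: card_image inj_on_subset)
  also have "\<dots> \<le> card Y"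
    using Y(1) finite_Z finite_subset unfolding X_def by (intro card_mono) auto
  finally have "card X \<le> phi"
    using Y(2) by simp
  moreover have "card {P \<in> S. feet E Z P \<inter> X = {}} \<le> card Z"
    using card_footless_le_card[OF Y(3)] unfolding X_def .
  moreover have "X \<subseteq> Z"
    unfolding X_def by blast
  ultimately show ?thesis by blast
qed

end

end

theorem mainTheorem12:
  fixes V :: "'a set" and E :: "'a set set" and Z :: "'a set"
    and S :: "'a list set" and s phi :: nat
  assumes "s \<ge> 1"
    and "EP_bound s phi"
    and "monic_plantation s V E Z"
    and "normal_set V E Z S"
  shows "\<exists>X\<subseteq>Z. card X \<le> phi \<and> card {P\<in>S. feet E Z P \<inter> X = {}} \<le> card Z"
proof -
  obtain h :: "'a \<Rightarrow> nat" where "inj_on h Z"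
    using finite_imp_inj_to_nat_seg[OF finite_Z[OF assms(3,4)]] by blast
  then show ?thesis
    by (rule ex_small_foot_set[OF assms(3,4) _ assms(2)])
qed

end
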